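(* Let $X$ be an L-space and $Y$ its spatial part. (1) If $X$ is a zero-dimensional L-space, then $Y$ is a zero-dimensional topological space. (2) If $X$ is an SL-space, then $X$ is a zero-dimensional L-space if and only if $Y$ is zero-dimensional.
   Context: A Priestley space is a Stone space $X$ with a partial order such that clopen upsets separate points. An L-space is a Priestley space in which the downset of each clopen set is clopen and the closure of each open upset is open. ${\sf ClopUp}(X)$ is the set of clopen upsets. The spatial part of $X$ is $Y=\{y\in X\mid{\downarrow}y\text{ is clopen}\}$, topologized by declaring $V\subseteq Y$ open iff $V=U\cap Y$ for some $U\in{\sf ClopUp}(X)$. $X$ is an SL-space if $Y$ is dense in $X$. A biset is a set that is both an upset and a downset; ${\sf ClopBi}(X)$ is the set of clopen bisets; for $U\in{\sf ClopUp}(X)$, $\mathrm{cen}\,U=\bigcup\{V\in{\sf ClopBi}(X)\mid V\subseteq U\}$. $X$ is a zero-dimensional L-space if $\mathrm{cen}\,U$ is dense in $U$ for every $U\in{\sf ClopUp}(X)$. A topological space is zero-dimensional if it has a basis of clopen sets. *)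

theory Defs
  imports "HOL-Analysis.Analysis"
begin

definition partial_order_on_carrier :: "'a topology \<Rightarrow> ('a \<Rightarrow> 'a \<Rightarrow> bool) \<Rightarrow> bool" where
  "partial_order_on_carrier T le \<longleftrightarrow>
     (\<forall>x\<in>topspace T. le x x) \<and>
     (\<forall>x\<in>topspace T. \<forall>y\<in>topspace T. le x y \<and> le y x \<longrightarrow> x = y) \<and>
     (\<forall>x\<in>topspace T. \<forall>y\<in>topspace T. \<forall>z\<in>topspace T. le x y \<and> le y z \<longrightarrow> le x z)"

definition clopen_in :: "'a topology \<Rightarrow> 'a set \<Rightarrow> bool" where
  "clopen_in T U \<longleftrightarrow> openin T U \<and> closedin T U"

definition is_upset :: "'a topology \<Rightarrow> ('a \<Rightarrow> 'a \<Rightarrow> bool) \<Rightarrow> 'a set \<Rightarrow> bool" where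
  "is_upset T le U \<longleftrightarrow> U \<subseteq> topspace T \<and> (\<forall>x\<in>U. \<forall>y\<in>topspace T. le x y \<longrightarrow> y \<in> U)"

definition is_downset :: "'a topology \<Rightarrow> ('a \<Rightarrow> 'a \<Rightarrow> bool) \<Rightarrow> 'a set \<Rightarrow> bool" where
  "is_downset T le U \<longleftrightarrow> U \<subseteq> topspace T \<and> (\<forall>x\<in>U. \<forall>y\<in>topspace T. le y x \<longrightarrow> y \<in> U)"

definition downset_of :: "'a topology \<Rightarrow> ('a \<Rightarrow> 'a \<Rightarrow> bool) \<Rightarrow> 'a set \<Rightarrow> 'a set" where
  "downset_of T le S = {x \<in> topspace T. \<exists>s\<in>S. le x s}"

definition Stone_space :: "'a topology \<Rightarrow> bool" where
  "Stone_space T \<longleftrightarrow> compact_space T \<and> Hausdorff_space T \<and> T dim_le 0"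

definition Priestley_space :: "'a topology \<Rightarrow> ('a \<Rightarrow> 'a \<Rightarrow> bool) \<Rightarrow> bool" where
  "Priestley_space T le \<longleftrightarrow> Stone_space T \<and> partial_order_on_carrier T le \<and>
     (\<forall>x\<in>topspace T. \<forall>y\<in>topspace T. \<not> le x y \<longrightarrow>
        (\<exists>U. clopen_in T U \<and> is_upset T le U \<and> x \<in> U \<and> y \<notin> U))"

definition L_space :: "'a topology \<Rightarrow> ('a \<Rightarrow> 'a \<Rightarrow> bool) \<Rightarrow> bool" where
  "L_space T le \<longleftrightarrow> Priestley_space T le \<and>
     (\<forall>U. clopen_in T U \<longrightarrow> clopen_in T (downset_of T le U)) \<and>
     (\<forall>U. openin T U \<and> is_upset T le U \<longrightarrow> openin T (T closure_of U))"

definition ClopUp :: "'a topology \<Rightarrow> ('a \<Rightarrow> 'a \<Rightarrow> bool) \<Rightarrow> 'a set set" where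
  "ClopUp T le = {U. clopen_in T U \<and> is_upset T le U}"

definition ClopBi :: "'a topology \<Rightarrow> ('a \<Rightarrow> 'a \<Rightarrow> bool) \<Rightarrow> 'a set set" where
  "ClopBi T le = {U. clopen_in T U \<and> is_upset T le U \<and> is_downset T le U}"

definition cen :: "'a topology \<Rightarrow> ('a \<Rightarrow> 'a \<Rightarrow> bool) \<Rightarrow> 'a set \<Rightarrow> 'a set" where
  "cen T le U = \<Union>{V \<in> ClopBi T le. V \<subseteq> U}"

definition spatial_part :: "'a topology \<Rightarrow> ('a \<Rightarrow> 'a \<Rightarrow> bool) \<Rightarrow> 'a set" where
  "spatial_part T le = {y \<in> topspace T. clopen_in T (downset_of T le {y})}"

text \<open>Topology on the spatial part: open sets are the traces U \<inter> Y of clopen upsets U.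
  We take the topology generated by these traces; in an L-space the traces are
  already closed under arbitrary unions and finite intersections, so this is
  exactly the family of traces.\<close>
definition spatial_topology :: "'a topology \<Rightarrow> ('a \<Rightarrow> 'a \<Rightarrow> bool) \<Rightarrow> 'a topology" where
  "spatial_topology T le =
     topology_generated_by {U \<inter> spatial_part T le | U. U \<in> ClopUp T le}"

definition SL_space :: "'a topology \<Rightarrow> ('a \<Rightarrow> 'a \<Rightarrow> bool) \<Rightarrow> bool" where
  "SL_space T le \<longleftrightarrow> L_space T le \<and> T closure_of (spatial_part T le) = topspace T"

definition zero_dim_L_space :: "'a topology \<Rightarrow> ('a \<Rightarrow> 'a \<Rightarrow> bool) \<Rightarrow> bool" where
  "zero_dim_L_space T le \<longleftrightarrow> L_space T le \<and>
     (\<forall>U \<in> ClopUp T le. U \<subseteq> T closure_of (cen T le U))"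

end

theory Submission
  imports Defs
begin

text \<open>If \<open>y \<in> Y\<close> lies in a clopen upset \<open>U\<close> of a zero-dimensional L-space, then \<open>\<down>y \<inter> U\<close> is an
  open neighbourhood of \<open>y\<close>, so it meets \<open>cen U\<close>; the clopen biset containing such a point below
  \<open>y\<close> contains \<open>y\<close> and lies in \<open>U\<close>. Hence traces of clopen bisets form a clopen base of \<open>Y\<close>.

  Conversely, in an SL-space every clopen \<open>W \<subseteq> Y\<close> is the trace of a clopen biset: \<open>W\<close> and
  \<open>Y - W\<close> are traces of open upsets, which are disjoint by density of \<open>Y\<close>; by the L-space axioms
  their closures are clopen upsets, again disjoint and covering \<open>X\<close>, so each is also a downset.
  If \<open>W \<subseteq> U \<inter> Y\<close>, density puts this biset inside \<open>U\<close>. Thus \<open>U \<inter> Y \<subseteq> cen U\<close>, and the open set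
  \<open>U\<close> lies in the closure of \<open>U \<inter> Y\<close>.\<close>

lemma dimension_le_0_clopen_base:
  "X dim_le 0 \<longleftrightarrow>
     (\<forall>W x. openin X W \<and> x \<in> W \<longrightarrow> (\<exists>U. closedin X U \<and> openin X U \<and> x \<in> U \<and> U \<subseteq> W))"
  by (simp add: dimension_le_0_neighbourhood_base_of_clopen open_neighbourhood_base_of)

lemma dense_openin_subset_closedin:
  assumes "X closure_of D = topspace X" "openin X G" "closedin X F" "G \<inter> D \<subseteq> F"
  shows "G \<subseteq> F"
proof -
  have "G = G \<inter> X closure_of D"
    using assms(1,2) openin_subset by blast
  also have "\<dots> \<subseteq> X closure_of (G \<inter> D)"
    by (rule openin_Int_closure_of_subset[OF assms(2)])
  also have "\<dots> \<subseteq> F"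
    by (rule closure_of_minimal[OF assms(4,3)])
  finally show ?thesis .
qed

lemma is_upset_Union: "(\<And>A. A \<in> F \<Longrightarrow> is_upset T le A) \<Longrightarrow> is_upset T le (\<Union>F)"
  unfolding is_upset_def by blast

lemma is_upset_complement: "is_downset T le D \<Longrightarrow> is_upset T le (topspace T - D)"
  unfolding is_upset_def is_downset_def by blast

lemma is_downset_complement: "is_upset T le U \<Longrightarrow> is_downset T le (topspace T - U)"
  unfolding is_upset_def is_downset_def by blast

lemma ClopUp_Int: "A \<in> ClopUp T le \<Longrightarrow> B \<in> ClopUp T le \<Longrightarrow> A \<inter> B \<in> ClopUp T le"
  unfolding ClopUp_def is_upset_def clopen_in_def by auto

lemma topspace_in_ClopUp: "topspace T \<in> ClopUp T le"
  unfolding ClopUp_def clopen_in_def is_upset_def by auto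

lemma ClopBi_complement_in_ClopUp:
  assumes "V \<in> ClopBi T le"
  shows "topspace T - V \<in> ClopUp T le"
  using assms is_upset_complement[of T le V]
  unfolding ClopBi_def ClopUp_def clopen_in_def by auto

lemma L_space_imp_dim_le_0: "L_space T le \<Longrightarrow> T dim_le 0"
  unfolding L_space_def Priestley_space_def Stone_space_def by auto

lemma L_space_refl: "L_space T le \<Longrightarrow> x \<in> topspace T \<Longrightarrow> le x x"
  unfolding L_space_def Priestley_space_def partial_order_on_carrier_def by auto

lemma L_space_closure_of_upset:
  assumes L: "L_space T le" and B: "is_upset T le B"
  shows "is_upset T le (T closure_of B)"
  unfolding is_upset_def
proof (intro conjI ballI impI closure_of_subset_topspace)
  fix x z assume x: "x \<in> T closure_of B" and z: "z \<in> topspace T" and "le x z"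
  show "z \<in> T closure_of B"
  proof (rule ccontr)
    assume "z \<notin> T closure_of B"
    with z have "openin T (topspace T - T closure_of B)" "z \<in> topspace T - T closure_of B"
      by auto
    then obtain V where V: "closedin T V" "openin T V" "z \<in> V" "V \<subseteq> topspace T - T closure_of B"
      using L_space_imp_dim_le_0[OF L] unfolding dimension_le_0_clopen_base by blast
    have "openin T (downset_of T le V)"
      using L V(1,2) unfolding L_space_def clopen_in_def by blast
    moreover have "x \<in> downset_of T le V"
      using subsetD[OF closure_of_subset_topspace x] \<open>le x z\<close> V(3)
      unfolding downset_of_def by blast
    ultimately obtain b where b: "b \<in> B" "b \<in> downset_of T le V"
      using x unfolding in_closure_of by blast
    then obtain c where c: "c \<in> V" "le b c"
      unfolding downset_of_def by blast
    then have "c \<in> B"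
      using B b(1) V(4) unfolding is_upset_def by blast
    then show False
      using c(1) V(4) closure_of_subset[of B T] B unfolding is_upset_def by blast
  qed
qed

lemma L_space_closure_of_open_upset:
  assumes "L_space T le" "openin T G" "is_upset T le G"
  shows "T closure_of G \<in> ClopUp T le"
  using assms L_space_closure_of_upset[OF assms(1,3)]
  unfolding L_space_def ClopUp_def clopen_in_def by auto

lemma topspace_spatial_topology: "topspace (spatial_topology T le) = spatial_part T le"
proof -
  have "\<Union>{U \<inter> spatial_part T le | U. U \<in> ClopUp T le} = spatial_part T le"
    using topspace_in_ClopUp[of T le] unfolding spatial_part_def by blast
  then show ?thesis
    unfolding spatial_topology_def by simp
qed

lemma openin_spatial_topology_trace:
  "A \<in> ClopUp T le \<Longrightarrow> openin (spatial_topology T le) (A \<inter> spatial_part T le)"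
  unfolding spatial_topology_def openin_topology_generated_by_iff
  by (auto intro: generate_topology_on.Basis)

lemma openin_spatial_topologyD:
  assumes "openin (spatial_topology T le) W" "y \<in> W"
  shows "\<exists>A\<in>ClopUp T le. y \<in> A \<and> A \<inter> spatial_part T le \<subseteq> W"
proof -
  have "generate_topology_on {U \<inter> spatial_part T le | U. U \<in> ClopUp T le} W"
    using assms(1) unfolding spatial_topology_def by (rule openin_topology_generated_by)
  then have "\<forall>y\<in>W. \<exists>A\<in>ClopUp T le. y \<in> A \<and> A \<inter> spatial_part T le \<subseteq> W"
  proof (induction rule: generate_topology_on.induct)
    case (Int a b)
    show ?case
    proof
      fix y assume "y \<in> a \<inter> b"
      then obtain A B where "A \<in> ClopUp T le" "y \<in> A" "A \<inter> spatial_part T le \<subseteq> a"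
        "B \<in> ClopUp T le" "y \<in> B" "B \<inter> spatial_part T le \<subseteq> b"
        using Int.IH by blast
      then show "\<exists>C\<in>ClopUp T le. y \<in> C \<and> C \<inter> spatial_part T le \<subseteq> a \<inter> b"
        by (intro bexI[of _ "A \<inter> B"]) (auto intro: ClopUp_Int)
    qed
  next
    case (UN K)
    then show ?case by (meson UnionE Union_upper subset_trans)
  qed blast+
  then show ?thesis
    using assms(2) by blast
qed

lemma openin_spatial_topology_open_upset_trace:
  assumes "openin (spatial_topology T le) W"
  obtains G where "openin T G" "is_upset T le G" "W = G \<inter> spatial_part T le"
proof
  let ?G = "\<Union>{A \<in> ClopUp T le. A \<inter> spatial_part T le \<subseteq> W}"
  show "openin T ?G"
    by (rule openin_Union) (auto simp: ClopUp_def clopen_in_def)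
  show "is_upset T le ?G"
    by (rule is_upset_Union) (auto simp: ClopUp_def)
  have "W \<subseteq> spatial_part T le"
    using openin_subset[OF assms] by (simp add: topspace_spatial_topology)
  then show "W = ?G \<inter> spatial_part T le"
    using openin_spatial_topologyD[OF assms] by blast
qed

lemma ClopBi_trace_clopen_spatial:
  assumes "V \<in> ClopBi T le"
  shows "closedin (spatial_topology T le) (V \<inter> spatial_part T le)"
    and "openin (spatial_topology T le) (V \<inter> spatial_part T le)"
proof -
  have "topspace (spatial_topology T le) - V \<inter> spatial_part T le
       = (topspace T - V) \<inter> spatial_part T le"
    unfolding topspace_spatial_topology spatial_part_def by auto
  then show "closedin (spatial_topology T le) (V \<inter> spatial_part T le)"
    unfolding closedin_def topspace_spatial_topology
    using openin_spatial_topology_trace[OF ClopBi_complement_in_ClopUp[OF assms]] by auto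
  show "openin (spatial_topology T le) (V \<inter> spatial_part T le)"
    using assms by (intro openin_spatial_topology_trace) (auto simp: ClopBi_def ClopUp_def)
qed

lemma zero_dim_L_space_spatial_point_in_ClopBi:
  assumes Z: "zero_dim_L_space T le" and y: "y \<in> spatial_part T le"
    and A: "A \<in> ClopUp T le" "y \<in> A"
  obtains V where "V \<in> ClopBi T le" "y \<in> V" "V \<subseteq> A"
proof -
  have yX: "y \<in> topspace T" and "clopen_in T (downset_of T le {y})"
    using y unfolding spatial_part_def by auto
  then have "openin T (downset_of T le {y} \<inter> A)"
    using A(1) unfolding clopen_in_def ClopUp_def by auto
  moreover have "y \<in> downset_of T le {y} \<inter> A"
    using A(2) yX L_space_refl[of T le y] Z unfolding downset_of_def zero_dim_L_space_def by auto
  moreover have "y \<in> T closure_of (cen T le A)"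
    using Z A unfolding zero_dim_L_space_def by auto
  ultimately obtain z where "z \<in> cen T le A" "z \<in> downset_of T le {y}"
    unfolding in_closure_of by blast
  then obtain V where V: "V \<in> ClopBi T le" "V \<subseteq> A" "z \<in> V" "le z y"
    unfolding cen_def downset_of_def by blast
  then have "y \<in> V"
    using yX unfolding ClopBi_def is_upset_def by blast
  then show ?thesis
    using that V by blast
qed

lemma SL_space_clopen_spatial_trace_ClopBi:
  assumes S: "SL_space T le"
    and W: "closedin (spatial_topology T le) W" "openin (spatial_topology T le) W"
  obtains C where "C \<in> ClopBi T le" "W = C \<inter> spatial_part T le"
proof -
  let ?Y = "spatial_part T le"
  have L: "L_space T le" and dense: "T closure_of ?Y = topspace T"
    using S unfolding SL_space_def by auto
  have "openin (spatial_topology T le) (?Y - W)"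
    using W(1) unfolding closedin_def topspace_spatial_topology by blast
  obtain G1 where G1: "openin T G1" "is_upset T le G1" "W = G1 \<inter> ?Y"
    using openin_spatial_topology_open_upset_trace[OF W(2)] .
  obtain G2 where G2: "openin T G2" "is_upset T le G2" "?Y - W = G2 \<inter> ?Y"
    using openin_spatial_topology_open_upset_trace[OF \<open>openin _ (?Y - W)\<close>] .
  define C1 where "C1 = T closure_of G1"
  define C2 where "C2 = T closure_of G2"
  have C1: "C1 \<in> ClopUp T le" and C2: "C2 \<in> ClopUp T le"
    unfolding C1_def C2_def using L_space_closure_of_open_upset L G1 G2 by blast+
  then have C1_clopen: "openin T C1" "closedin T C1" and C2_clopen: "openin T C2" "closedin T C2"
    unfolding ClopUp_def clopen_in_def by auto
  have G1_C1: "G1 \<subseteq> C1" and G2_C2: "G2 \<subseteq> C2"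
    unfolding C1_def C2_def using G1(1) G2(1) by (simp_all add: closure_of_subset openin_subset)
  have "G1 \<inter> G2 \<subseteq> {}"
  proof (rule dense_openin_subset_closedin[OF dense])
    show "openin T (G1 \<inter> G2)"
      using G1(1) G2(1) by (rule openin_Int)
    show "G1 \<inter> G2 \<inter> ?Y \<subseteq> {}"
      using G1(3) G2(3) by blast
  qed simp
  then have "G2 \<inter> C1 = {}"
    unfolding C1_def using openin_Int_closure_of_eq_empty[OF G2(1)] by blast
  then have disj: "C1 \<inter> C2 = {}"
    unfolding C2_def using openin_Int_closure_of_eq_empty[OF C1_clopen(1)] by blast
  have "?Y \<subseteq> C1 \<union> C2"
    using G1(3) G2(3) G1_C1 G2_C2 by blast
  then have "topspace T \<subseteq> C1 \<union> C2"
    using closure_of_minimal[of ?Y "C1 \<union> C2" T] C1_clopen(2) C2_clopen(2) dense by auto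
  then have "C1 = topspace T - C2"
    using disj openin_subset[OF C1_clopen(1)] by blast
  then have "is_downset T le C1"
    using C2 is_downset_complement by (auto simp: ClopUp_def)
  then have "C1 \<in> ClopBi T le"
    using C1 unfolding ClopBi_def ClopUp_def by auto
  moreover have "W = C1 \<inter> ?Y"
    using G1(3) G2(3) G1_C1 G2_C2 disj by blast
  ultimately show ?thesis
    using that by blast
qed

lemma zero_dim_L_space_imp_spatial_dim_le_0:
  assumes Z: "zero_dim_L_space T le"
  shows "spatial_topology T le dim_le 0"
  unfolding dimension_le_0_clopen_base
proof (intro allI impI, elim conjE)
  fix G y assume G: "openin (spatial_topology T le) G" and "y \<in> G"
  obtain A where A: "A \<in> ClopUp T le" "y \<in> A" "A \<inter> spatial_part T le \<subseteq> G"
    using openin_spatial_topologyD[OF G \<open>y \<in> G\<close>] by blast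
  have y: "y \<in> spatial_part T le"
    using openin_subset[OF G] \<open>y \<in> G\<close> unfolding topspace_spatial_topology by blast
  obtain V where V: "V \<in> ClopBi T le" "y \<in> V" "V \<subseteq> A"
    using zero_dim_L_space_spatial_point_in_ClopBi[OF Z y A(1,2)] .
  show "\<exists>U. closedin (spatial_topology T le) U \<and> openin (spatial_topology T le) U \<and>
             y \<in> U \<and> U \<subseteq> G"
  proof (intro exI conjI)
    show "closedin (spatial_topology T le) (V \<inter> spatial_part T le)"
      by (rule ClopBi_trace_clopen_spatial(1)[OF V(1)])
    show "openin (spatial_topology T le) (V \<inter> spatial_part T le)"
      by (rule ClopBi_trace_clopen_spatial(2)[OF V(1)])
    show "y \<in> V \<inter> spatial_part T le"
      using V(2) y by blast
    show "V \<inter> spatial_part T le \<subseteq> G"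
      using V(3) A(3) by blast
  qed
qed

lemma SL_space_spatial_dim_le_0_imp_zero_dim_L_space:
  assumes S: "SL_space T le" and Z: "spatial_topology T le dim_le 0"
  shows "zero_dim_L_space T le"
proof -
  let ?Y = "spatial_part T le"
  have dense: "T closure_of ?Y = topspace T"
    using S unfolding SL_space_def by auto
  have trace_in_cen: "U \<inter> ?Y \<subseteq> cen T le U" if U: "U \<in> ClopUp T le" for U
  proof
    fix y assume y: "y \<in> U \<inter> ?Y"
    obtain W where W: "closedin (spatial_topology T le) W" "openin (spatial_topology T le) W"
      "y \<in> W" "W \<subseteq> U \<inter> ?Y"
      using Z openin_spatial_topology_trace[OF U] y unfolding dimension_le_0_clopen_base by meson
    obtain C where C: "C \<in> ClopBi T le" "W = C \<inter> ?Y"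
      using SL_space_clopen_spatial_trace_ClopBi[OF S W(1,2)] .
    have "C \<subseteq> U"
    proof (rule dense_openin_subset_closedin[OF dense])
      show "openin T C"
        using C(1) unfolding ClopBi_def clopen_in_def by blast
      show "closedin T U"
        using U unfolding ClopUp_def clopen_in_def by blast
      show "C \<inter> ?Y \<subseteq> U"
        using C(2) W(4) by blast
    qed
    then show "y \<in> cen T le U"
      using C W(3) unfolding cen_def by blast
  qed
  have "U \<subseteq> T closure_of (cen T le U)" if U: "U \<in> ClopUp T le" for U
  proof (rule dense_openin_subset_closedin[OF dense])
    show "openin T U"
      using U unfolding ClopUp_def clopen_in_def by blast
    have "cen T le U \<subseteq> topspace T"
      unfolding cen_def ClopBi_def clopen_in_def using openin_subset by blast
    then show "U \<inter> ?Y \<subseteq> T closure_of (cen T le U)"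
      using trace_in_cen[OF U] closure_of_subset by blast
  qed simp
  then show ?thesis
    using S unfolding zero_dim_L_space_def SL_space_def by blast
qed

theorem theorem5p16:
  fixes T :: "'a topology" and le :: "'a \<Rightarrow> 'a \<Rightarrow> bool"
  assumes "L_space T le"
  shows "(zero_dim_L_space T le \<longrightarrow> (spatial_topology T le) dim_le 0)
       \<and> (SL_space T le \<longrightarrow> (zero_dim_L_space T le \<longleftrightarrow> (spatial_topology T le) dim_le 0))"
  using zero_dim_L_space_imp_spatial_dim_le_0 SL_space_spatial_dim_le_0_imp_zero_dim_L_space
  by blast

end
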